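(* Let $\Gamma$ be a group with finite symmetric generating set $S$ acting on a countably infinite set $X$, let $\mu$ be a $\Gamma$-invariant mean on $X$, and let $R$ be a subgraph of the Schreier graph $S_\Gamma$ all of whose connected components have at most $C$ vertices. Suppose that in every component of $R$ the number of edges divided by the number of vertices is at least $\alpha$. Then $\alpha\,\mu(V(R))\le\mu_E(R)$.
   Context: A mean on $X$ is a finitely additive $\mu:2^X\to[0,1]$ with $\mu(X)=1$; $\Gamma$-invariant means $\mu(\gamma A)=\mu(A)$ for all $\gamma,A$. The Schreier graph $S_\Gamma$ has vertex set $X$ and an edge $\{x,y\}$ when $x\neq y$ and $s(x)=y$ for some $s\in S$. For a subgraph $R$, $\deg_R(x)$ is the degree of $x$ in $R$ ($0$ for $x\notin V(R)$) and $\mu_E(R)=\frac12\sum_{k\ge0}k\,\mu(\{x:\deg_R(x)=k\})$. *)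

theory Defs
  imports Complex_Main "HOL-Algebra.Group_Action" "HOL-Algebra.Generated_Groups" "HOL-Library.Countable_Set"
begin

definition is_mean :: "'x set \<Rightarrow> ('x set \<Rightarrow> real) \<Rightarrow> bool" where
  "is_mean X \<mu> \<longleftrightarrow>
     (\<forall>A. A \<subseteq> X \<longrightarrow> 0 \<le> \<mu> A \<and> \<mu> A \<le> 1) \<and> \<mu> X = 1 \<and>
     (\<forall>A B. A \<subseteq> X \<longrightarrow> B \<subseteq> X \<longrightarrow> A \<inter> B = {} \<longrightarrow> \<mu> (A \<union> B) = \<mu> A + \<mu> B)"

definition invariant_mean ::
  "('g, 'b) monoid_scheme \<Rightarrow> ('g \<Rightarrow> 'x \<Rightarrow> 'x) \<Rightarrow> 'x set \<Rightarrow> ('x set \<Rightarrow> real) \<Rightarrow> bool" where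
  "invariant_mean G \<phi> X \<mu> \<longleftrightarrow> is_mean X \<mu> \<and>
     (\<forall>g \<in> carrier G. \<forall>A. A \<subseteq> X \<longrightarrow> \<mu> (\<phi> g ` A) = \<mu> A)"

definition schreier_edges :: "('g \<Rightarrow> 'x \<Rightarrow> 'x) \<Rightarrow> 'g set \<Rightarrow> 'x set \<Rightarrow> 'x set set" where
  "schreier_edges \<phi> S X = {{x, y} | x y. x \<in> X \<and> y \<in> X \<and> x \<noteq> y \<and> (\<exists>s \<in> S. \<phi> s x = y)}"

definition is_subgraph :: "('g \<Rightarrow> 'x \<Rightarrow> 'x) \<Rightarrow> 'g set \<Rightarrow> 'x set \<Rightarrow> 'x set \<Rightarrow> 'x set set \<Rightarrow> bool" where
  "is_subgraph \<phi> S X V E \<longleftrightarrow> V \<subseteq> X \<and> E \<subseteq> schreier_edges \<phi> S X \<and> (\<forall>e \<in> E. e \<subseteq> V)"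

definition adj :: "'x set set \<Rightarrow> ('x \<times> 'x) set" where
  "adj E = {(x, y). {x, y} \<in> E}"

definition component :: "'x set set \<Rightarrow> 'x \<Rightarrow> 'x set" where
  "component E x = {y. (x, y) \<in> (adj E)\<^sup>*}"

definition component_edges :: "'x set set \<Rightarrow> 'x \<Rightarrow> 'x set set" where
  "component_edges E x = {e \<in> E. e \<subseteq> component E x}"

text \<open>Degree in R; 0 for vertices not in V(R) (they lie on no edge).\<close>
definition deg :: "'x set set \<Rightarrow> 'x \<Rightarrow> nat" where
  "deg E x = card {e \<in> E. x \<in> e}"

definition mu_E :: "'x set \<Rightarrow> ('x set \<Rightarrow> real) \<Rightarrow> 'x set set \<Rightarrow> real" where
  "mu_E X \<mu> E = (1/2) * (\<Sum>k. real k * \<mu> {x \<in> X. deg E x = k})"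

end

theory Submission imports Defs begin

(*
  In every component K we have, by the
  handshake lemma, sum over y in K of (deg y / 2 - alpha) = |E(K)| - alpha |K| >= 0.  The
  theorem is the "integrated" version of this inequality against the invariant mean mu.

  To integrate, choose a leader in every component.  Each vertex y is reached from its leader
  by a group element a(y) that is a word of length at most C*C in S; these words form a finite
  set F.  Cut V into the finitely many pieces P(k,g) = {y. deg y = k, a y = g} and translate
  each piece back by g^-1.  By invariance the translated pieces carry the same mass, and a point
  x lies in the translated pieces exactly for the indices (deg y, a y) of the vertices y of its
  component when x is a leader (and in none otherwise).  Hence the weighted sum of the masses
  equals the integral of a pointwise nonnegative function and is nonnegative.
*)

section \<open>Finitely additive means\<close>

lemma mean_nonneg: "is_mean X \<mu> \<Longrightarrow> A \<subseteq> X \<Longrightarrow> 0 \<le> \<mu> A"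
  unfolding is_mean_def by blast

lemma mean_add:
  "is_mean X \<mu> \<Longrightarrow> A \<subseteq> X \<Longrightarrow> B \<subseteq> X \<Longrightarrow> A \<inter> B = {} \<Longrightarrow> \<mu> (A \<union> B) = \<mu> A + \<mu> B"
  unfolding is_mean_def by blast

lemma mean_empty: "is_mean X \<mu> \<Longrightarrow> \<mu> {} = 0"
  using mean_add[of X \<mu> "{}" "{}"] by simp

lemma mean_UN_disjoint:
  assumes m: "is_mean X \<mu>" and fin: "finite I" and sub: "\<forall>i\<in>I. A i \<subseteq> X"
    and dis: "\<forall>i\<in>I. \<forall>j\<in>I. i \<noteq> j \<longrightarrow> A i \<inter> A j = {}"
  shows "\<mu> (\<Union>i\<in>I. A i) = (\<Sum>i\<in>I. \<mu> (A i))"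
  using fin sub dis
proof (induction I rule: finite_induct)
  case empty then show ?case using mean_empty[OF m] by simp
next
  case (insert i I)
  have "A i \<inter> (\<Union>j\<in>I. A j) = {}" using insert.prems(2) insert.hyps(2) by auto
  hence "\<mu> (A i \<union> (\<Union>j\<in>I. A j)) = \<mu> (A i) + \<mu> (\<Union>j\<in>I. A j)"
    using mean_add[OF m, of "A i" "\<Union>j\<in>I. A j"] insert.prems(1) by auto
  moreover have "\<mu> (\<Union>j\<in>I. A j) = (\<Sum>j\<in>I. \<mu> (A j))"
    using insert.IH insert.prems by auto
  ultimately show ?case using insert.hyps by simp
qed

text \<open>Proof: split
  X into the atoms of the finite family Q.\<close>

lemma mean_nonneg_combination:
  assumes m: "is_mean X \<mu>" and fin: "finite I" and sub: "\<forall>i\<in>I. Q i \<subseteq> X"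
    and pos: "\<forall>x\<in>X. 0 \<le> (\<Sum>i\<in>{i\<in>I. x \<in> Q i}. c i)"
  shows "0 \<le> (\<Sum>i\<in>I. c i * \<mu> (Q i))"
proof -
  define atom where "atom J = {x\<in>X. {i\<in>I. x \<in> Q i} = J}" for J
  have dis: "\<forall>i\<in>P. \<forall>j\<in>P. i \<noteq> j \<longrightarrow> atom i \<inter> atom j = {}" for P unfolding atom_def by auto
  have Q_atoms: "\<mu> (Q i) = (\<Sum>J\<in>{J\<in>Pow I. i \<in> J}. \<mu> (atom J))" if "i \<in> I" for i
  proof -
    have "Q i = (\<Union>J\<in>{J\<in>Pow I. i \<in> J}. atom J)" using that sub unfolding atom_def by auto
    moreover have "finite {J\<in>Pow I. i \<in> J}" using fin by simp
    ultimately show ?thesis using mean_UN_disjoint[OF m _ _ dis] unfolding atom_def by auto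
  qed
  have "(\<Sum>i\<in>I. c i * \<mu> (Q i)) = (\<Sum>i\<in>I. \<Sum>J\<in>{J\<in>Pow I. i \<in> J}. c i * \<mu> (atom J))"
    using Q_atoms by (simp add: sum_distrib_left)
  also have "\<dots> = (\<Sum>J\<in>Pow I. \<Sum>i\<in>{i\<in>I. i \<in> J}. c i * \<mu> (atom J))"
    by (rule sum.swap_restrict) (use fin in auto)
  also have "\<dots> = (\<Sum>J\<in>Pow I. \<mu> (atom J) * (\<Sum>i\<in>J. c i))"
  proof (rule sum.cong)
    fix J assume "J \<in> Pow I"
    hence "{i\<in>I. i \<in> J} = J" by auto
    thus "(\<Sum>i\<in>{i\<in>I. i \<in> J}. c i * \<mu> (atom J)) = \<mu> (atom J) * (\<Sum>i\<in>J. c i)"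
      by (simp add: sum_distrib_right mult.commute)
  qed simp
  also have "\<dots> \<ge> 0"
  proof (rule sum_nonneg)
    fix J assume "J \<in> Pow I"
    show "0 \<le> \<mu> (atom J) * (\<Sum>i\<in>J. c i)"
    proof (cases "atom J = {}")
      case True then show ?thesis using mean_empty[OF m] by simp
    next
      case False
      then obtain x where "x \<in> X" "{i\<in>I. x \<in> Q i} = J" unfolding atom_def by auto
      hence "0 \<le> (\<Sum>i\<in>J. c i)" using pos by metis
      moreover have "0 \<le> \<mu> (atom J)" using mean_nonneg[OF m, of "atom J"] unfolding atom_def by auto
      ultimately show ?thesis by simp
    qed
  qed
  finally show ?thesis .
qed

lemma act_one:
  assumes "group_action G X \<phi>" "x \<in> X"
  shows "\<phi> \<one>\<^bsub>G\<^esub> x = x"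
proof -
  interpret group_action G X \<phi> by fact
  have "(\<lambda>x \<in> X. x) x = \<phi> \<one>\<^bsub>G\<^esub> x" by (simp only: id_eq_one)
  thus ?thesis using assms(2) by simp
qed

lemma act_inv_cancel:
  assumes "group_action G X \<phi>" "g \<in> carrier G" "x \<in> X"
  shows "\<phi> (inv\<^bsub>G\<^esub> g) (\<phi> g x) = x" and "\<phi> g (\<phi> (inv\<^bsub>G\<^esub> g) x) = x"
proof -
  interpret group_action G X \<phi> by fact
  interpret group G using group_hom group_hom.axioms(1) by auto
  show "\<phi> (inv\<^bsub>G\<^esub> g) (\<phi> g x) = x" using orbit_sym_aux assms(2,3) by blast
  show "\<phi> g (\<phi> (inv\<^bsub>G\<^esub> g) x) = x"
    using orbit_sym_aux[of "inv\<^bsub>G\<^esub> g" x] assms(2,3) by simp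
qed

section \<open>Connected components\<close>

definition two_element_edges :: "'x set set \<Rightarrow> bool" where
  "two_element_edges E \<longleftrightarrow> (\<forall>e\<in>E. \<exists>a b. a \<noteq> b \<and> e = {a, b})"

lemma adj_sym: "(x, y) \<in> adj E \<Longrightarrow> (y, x) \<in> adj E"
  unfolding adj_def by (simp add: insert_commute)

lemma adj_rtrancl_sym: "(x, y) \<in> (adj E)\<^sup>* \<Longrightarrow> (y, x) \<in> (adj E)\<^sup>*"
proof (induction rule: rtrancl_induct)
  case (step z w)
  have "(w, z) \<in> adj E" using step.hyps(2) by (rule adj_sym)
  thus ?case using step.IH by (rule converse_rtrancl_into_rtrancl)
qed simp

lemma component_self: "x \<in> component E x"
  unfolding component_def by simp

lemma component_sym: "y \<in> component E x \<Longrightarrow> x \<in> component E y"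
  unfolding component_def by (simp add: adj_rtrancl_sym)

lemma component_eq: "y \<in> component E x \<Longrightarrow> component E y = component E x"
proof -
  assume "y \<in> component E x"
  hence xy: "(x, y) \<in> (adj E)\<^sup>*" and yx: "(y, x) \<in> (adj E)\<^sup>*"
    unfolding component_def by (auto simp: adj_rtrancl_sym)
  show ?thesis unfolding component_def
    using rtrancl_trans[OF xy] rtrancl_trans[OF yx] by blast
qed

lemma component_subset:
  assumes EV: "\<forall>e\<in>E. e \<subseteq> V" and x: "x \<in> V"
  shows "component E x \<subseteq> V"
proof
  fix y assume "y \<in> component E x"
  hence "(x, y) \<in> (adj E)\<^sup>*" unfolding component_def by simp
  thus "y \<in> V"
  proof (induction rule: rtrancl_induct)
    case (step z w) then show ?case using EV unfolding adj_def by auto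
  qed (rule x)
qed

lemma edge_subset_component:
  assumes "two_element_edges E" "e \<in> E" "y \<in> e"
  shows "e \<subseteq> component E y"
proof -
  obtain a b where ab: "e = {a, b}" using assms(1,2) unfolding two_element_edges_def by blast
  have "(y, a) \<in> adj E \<or> y = a" "(y, b) \<in> adj E \<or> y = b"
    using assms(2,3) ab unfolding adj_def by (auto simp: insert_commute)
  thus ?thesis using ab unfolding component_def by auto
qed

lemma path_within_component:
  assumes "(a, b) \<in> (adj E)\<^sup>*"
  shows "(a, b) \<in> (adj E \<inter> (component E a \<times> component E a))\<^sup>*"
  using assms
proof (induction rule: rtrancl_induct)
  case (step z w)
  have "z \<in> component E a" "w \<in> component E a"
    using step.hyps unfolding component_def by auto
  hence "(z, w) \<in> adj E \<inter> (component E a \<times> component E a)" using step.hyps by auto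
  thus ?case using step.IH by (meson rtrancl_into_rtrancl)
qed simp

lemma card_as_indicator_sum:
  "finite A \<Longrightarrow> real (card {e\<in>A. P e}) = (\<Sum>e\<in>A. if P e then 1 else 0)"
  by (simp add: sum.inter_filter[symmetric])

lemma handshake:
  assumes E: "two_element_edges E" and fin: "finite (component E x)"
  shows "(\<Sum>y\<in>component E x. real (deg E y)) = 2 * real (card (component_edges E x))"
proof -
  let ?K = "component E x" and ?CE = "component_edges E x"
  have finCE: "finite ?CE" unfolding component_edges_def
    by (rule finite_subset[of _ "Pow ?K"]) (use fin in auto)
  have deg_local: "deg E y = card {e\<in>?CE. y \<in> e}" if "y \<in> ?K" for y
  proof -
    have "{e\<in>E. y \<in> e} = {e\<in>?CE. y \<in> e}"
      using edge_subset_component[OF E] component_eq[OF that] unfolding component_edges_def by auto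
    thus ?thesis unfolding deg_def by simp
  qed
  have edge_card: "real (card {y\<in>?K. y \<in> e}) = 2" if e: "e \<in> ?CE" for e
  proof -
    have "e \<in> E" using e unfolding component_edges_def by simp
    then obtain a b where "e = {a, b}" "a \<noteq> b"
      using E unfolding two_element_edges_def by blast
    moreover have "{y\<in>?K. y \<in> e} = e" using e unfolding component_edges_def by auto
    ultimately show ?thesis by simp
  qed
  have "(\<Sum>y\<in>?K. real (deg E y)) = (\<Sum>y\<in>?K. \<Sum>e\<in>?CE. if y \<in> e then 1 else 0)"
    by (rule sum.cong) (simp_all add: deg_local card_as_indicator_sum[OF finCE])
  also have "\<dots> = (\<Sum>e\<in>?CE. \<Sum>y\<in>?K. if y \<in> e then 1 else 0)" by (rule sum.swap)
  also have "\<dots> = (\<Sum>e\<in>?CE. 2)"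
    by (rule sum.cong) (simp_all add: edge_card card_as_indicator_sum[OF fin, symmetric])
  finally show ?thesis by simp
qed

lemma component_excess_nonneg:
  assumes E: "two_element_edges E" and fin: "finite (component E x)"
    and ratio: "\<alpha> \<le> real (card (component_edges E x)) / real (card (component E x))"
  shows "0 \<le> (\<Sum>y\<in>component E x. real (deg E y) / 2 - \<alpha>)"
proof -
  let ?k = "real (card (component E x))" and ?m = "real (card (component_edges E x))"
  have "0 < ?k" using fin component_self[of x E] by (auto simp: card_gt_0_iff)
  hence "\<alpha> * ?k \<le> ?m" using ratio by (simp add: pos_le_divide_eq)
  have "(\<Sum>y\<in>component E x. real (deg E y) / 2 - \<alpha>)
      = (\<Sum>y\<in>component E x. real (deg E y)) / 2 - \<alpha> * ?k"
    by (simp add: sum_subtractf sum_divide_distrib mult.commute)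
  also have "\<dots> = ?m - \<alpha> * ?k" using handshake[OF E fin] by simp
  finally show ?thesis using \<open>\<alpha> * ?k \<le> ?m\<close> by simp
qed

text \<open>Only finite sets can have a positive ratio, as \<open>card\<close> of an infinite set is 0.\<close>

lemma finite_of_positive_ratio:
  fixes \<alpha> :: real
  assumes "0 < \<alpha>" and "\<alpha> \<le> real m / real (card K)"
  shows "finite K"
  using assms by (cases "finite K") auto

definition leader :: "'x set set \<Rightarrow> 'x \<Rightarrow> 'x" where
  "leader E y = (SOME z. z \<in> component E y)"

lemma leader_in_component: "leader E y \<in> component E y"
  unfolding leader_def by (rule someI[of _ y]) (rule component_self)

lemma leader_fibre:
  assumes EV: "\<forall>e\<in>E. e \<subseteq> V" and x: "x \<in> V"
  shows "{y\<in>V. leader E y = leader E x} = component E x"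
proof -
  have "leader E y = leader E x \<longleftrightarrow> y \<in> component E x" for y
  proof
    assume "leader E y = leader E x"
    hence "component E y = component E x"
      using leader_in_component component_eq by metis
    thus "y \<in> component E x" using component_self by metis
  qed (simp add: leader_def component_eq)
  thus ?thesis using component_subset[OF EV x] by auto
qed

lemma leader_fibre_excess_nonneg:
  assumes E: "two_element_edges E" and EV: "\<forall>e\<in>E. e \<subseteq> V"
    and fin: "\<forall>y\<in>V. finite (component E y)"
    and ratio: "\<forall>y\<in>V. \<alpha> \<le> real (card (component_edges E y)) / real (card (component E y))"
  shows "\<forall>x\<in>leader E ` V. 0 \<le> (\<Sum>y\<in>{y\<in>V. leader E y = x}. real (deg E y) / 2 - \<alpha>)"
proof
  fix x assume "x \<in> leader E ` V"
  then obtain y where y: "y \<in> V" "x = leader E y" by blast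
  show "0 \<le> (\<Sum>y\<in>{y\<in>V. leader E y = x}. real (deg E y) / 2 - \<alpha>)"
    unfolding y(2) leader_fibre[OF EV y(1)]
    using component_excess_nonneg[OF E] fin ratio y(1) by blast
qed

section \<open>Schreier graphs\<close>

text \<open>Since S is symmetric, every Schreier edge at x has the form \<open>{x, s x}\<close> with \<open>s \<in> S\<close>.\<close>

lemma schreier_edge_at:
  assumes ga: "group_action G X \<phi>" and SG: "S \<subseteq> carrier G" and Sinv: "\<forall>s\<in>S. inv\<^bsub>G\<^esub> s \<in> S"
    and e: "e \<in> schreier_edges \<phi> S X" and x: "x \<in> e"
  shows "\<exists>s\<in>S. e = {x, \<phi> s x}"
proof -
  obtain c s where cs: "e = {c, \<phi> s c}" "c \<in> X" "s \<in> S"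
    using e unfolding schreier_edges_def by blast
  show ?thesis
  proof (cases "x = c")
    case False
    hence "x = \<phi> s c" using cs x by auto
    hence "\<phi> (inv\<^bsub>G\<^esub> s) x = c" using act_inv_cancel(1)[OF ga] SG cs by blast
    thus ?thesis using Sinv cs \<open>x = \<phi> s c\<close> by (metis insert_commute)
  qed (use cs in auto)
qed

lemma schreier_two_element_edges:
  "E \<subseteq> schreier_edges \<phi> S X \<Longrightarrow> two_element_edges E"
  unfolding two_element_edges_def schreier_edges_def by blast

lemma schreier_deg_le:
  assumes ga: "group_action G X \<phi>" and SG: "S \<subseteq> carrier G" and Sinv: "\<forall>s\<in>S. inv\<^bsub>G\<^esub> s \<in> S"
    and S: "finite S" and sch: "E \<subseteq> schreier_edges \<phi> S X"
  shows "deg E x \<le> card S"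
proof -
  have "{e\<in>E. x \<in> e} \<subseteq> (\<lambda>s. {x, \<phi> s x}) ` S"
    using schreier_edge_at[OF ga SG Sinv] sch by blast
  hence "card {e\<in>E. x \<in> e} \<le> card ((\<lambda>s. {x, \<phi> s x}) ` S)"
    by (rule card_mono[OF finite_imageI[OF S]])
  also have "\<dots> \<le> card S" by (rule card_image_le[OF S])
  finally show ?thesis unfolding deg_def .
qed

primrec word_ball :: "('g, 'b) monoid_scheme \<Rightarrow> 'g set \<Rightarrow> nat \<Rightarrow> 'g set" where
  "word_ball G S 0 = {\<one>\<^bsub>G\<^esub>}"
| "word_ball G S (Suc n) = word_ball G S n \<union> (\<lambda>(s, g). s \<otimes>\<^bsub>G\<^esub> g) ` (S \<times> word_ball G S n)"

lemma word_ball_finite: "finite S \<Longrightarrow> finite (word_ball G S n)"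
  by (induction n) auto

lemma word_ball_carrier: "group G \<Longrightarrow> S \<subseteq> carrier G \<Longrightarrow> word_ball G S n \<subseteq> carrier G"
  by (induction n) (auto intro: group.is_monoid monoid.m_closed monoid.one_closed)

lemma word_ball_mono: "m \<le> n \<Longrightarrow> word_ball G S m \<subseteq> word_ball G S n"
  by (rule lift_Suc_mono_le[of "word_ball G S"]) auto

lemma path_by_word:
  assumes ga: "group_action G X \<phi>" and SG: "S \<subseteq> carrier G" and Sinv: "\<forall>s\<in>S. inv\<^bsub>G\<^esub> s \<in> S"
    and sch: "E \<subseteq> schreier_edges \<phi> S X" and R: "R \<subseteq> adj E" and a: "a \<in> X"
  shows "(a, b) \<in> R ^^ n \<Longrightarrow> \<exists>g\<in>word_ball G S n. \<phi> g a = b"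
proof (induction n arbitrary: b)
  case 0 then show ?case using act_one[OF ga a] by simp
next
  case (Suc n)
  interpret group_action G X \<phi> by fact
  have grp: "group G" using group_hom group_hom.axioms(1) by auto
  from Suc.prems obtain z where az: "(a, z) \<in> R ^^ n" and zb: "(z, b) \<in> R" by (rule relpow_Suc_E)
  obtain g where g: "g \<in> word_ball G S n" "\<phi> g a = z" using Suc.IH[OF az] by blast
  have gG: "g \<in> carrier G" using g(1) word_ball_carrier[OF grp SG] by blast
  have "{z, b} \<in> schreier_edges \<phi> S X" using zb R sch unfolding adj_def by auto
  then obtain t where t: "t \<in> S" "{z, b} = {z, \<phi> t z}"
    using schreier_edge_at[OF ga SG Sinv] by blast
  hence "b = \<phi> t z" by (simp add: doubleton_eq_iff) blast
  also have "\<dots> = \<phi> (t \<otimes>\<^bsub>G\<^esub> g) a" using composition_rule[OF a] t SG gG g(2) by auto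
  finally show ?case using t g by force
qed

text \<open>In a component with at most C vertices, every vertex is reached from the leader by a word
  of length at most \<open>C * C\<close> (a bound on the number of edges of the component).\<close>

lemma reached_from_leader:
  assumes ga: "group_action G X \<phi>" and SG: "S \<subseteq> carrier G" and Sinv: "\<forall>s\<in>S. inv\<^bsub>G\<^esub> s \<in> S"
    and sch: "E \<subseteq> schreier_edges \<phi> S X" and EX: "\<forall>e\<in>E. e \<subseteq> X" and y: "y \<in> X"
    and fin: "finite (component E y)" and card: "card (component E y) \<le> C"
  shows "\<exists>g\<in>word_ball G S (C * C). \<phi> g (leader E y) = y"
proof -
  let ?l = "leader E y"
  let ?K = "component E ?l"
  let ?R = "adj E \<inter> (?K \<times> ?K)"
  have K: "?K = component E y" by (rule component_eq[OF leader_in_component])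
  have lX: "?l \<in> X" using component_subset[OF EX y] leader_in_component[of E y] by blast
  have "(?l, y) \<in> (adj E)\<^sup>*"
    using component_sym[OF leader_in_component[of E y]] unfolding component_def by simp
  hence inR: "(?l, y) \<in> ?R\<^sup>*" by (rule path_within_component)
  have finKK: "finite (?K \<times> ?K)" using fin K by simp
  have finR: "finite ?R" by (rule finite_subset[OF _ finKK]) blast
  have "card ?R \<le> card (?K \<times> ?K)" by (rule card_mono[OF finKK]) blast
  also have "\<dots> \<le> C * C" using card K by (simp add: card_cartesian_product mult_le_mono)
  finally have cardR: "card ?R \<le> C * C" .
  obtain n where n: "n \<le> card ?R" "(?l, y) \<in> ?R ^^ n"
    using inR unfolding rtrancl_finite_eq_relpow[OF finR] by blast
  obtain g where "g \<in> word_ball G S n" "\<phi> g ?l = y"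
    using path_by_word[OF ga SG Sinv sch _ lX n(2)] by blast
  moreover have "word_ball G S n \<subseteq> word_ball G S (C * C)"
    using n(1) cardR by (intro word_ball_mono) simp
  ultimately show ?thesis by blast
qed

lemma leader_routes:
  assumes ga: "group_action G X \<phi>" and SG: "S \<subseteq> carrier G" and Sinv: "\<forall>s\<in>S. inv\<^bsub>G\<^esub> s \<in> S"
    and sch: "E \<subseteq> schreier_edges \<phi> S X" and EV: "\<forall>e\<in>E. e \<subseteq> V" and VX: "V \<subseteq> X"
    and fin: "\<forall>y\<in>V. finite (component E y)" and card: "\<forall>y\<in>V. card (component E y) \<le> C"
  obtains a where
    "\<forall>y\<in>V. leader E y \<in> V \<and> a y \<in> word_ball G S (C * C) \<and> \<phi> (a y) (leader E y) = y"
proof -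
  have EX: "\<forall>e\<in>E. e \<subseteq> X" using EV VX by blast
  have "\<forall>y\<in>V. \<exists>g. leader E y \<in> V \<and> g \<in> word_ball G S (C * C) \<and> \<phi> g (leader E y) = y"
  proof
    fix y assume y: "y \<in> V"
    have "leader E y \<in> V" using component_subset[OF EV y] leader_in_component[of E y] by blast
    moreover have "\<exists>g\<in>word_ball G S (C * C). \<phi> g (leader E y) = y"
      using reached_from_leader[OF ga SG Sinv sch EX _ fin[rule_format, OF y]] y VX card by blast
    ultimately show "\<exists>g. leader E y \<in> V \<and> g \<in> word_ball G S (C * C) \<and> \<phi> g (leader E y) = y"
      by blast
  qed
  thus ?thesis using that bchoice by metis
qed

section \<open>The transport inequality\<close>

lemma invariant_mean_transport:
  assumes inv_mean: "invariant_mean G \<phi> X \<mu>" and ga: "group_action G X \<phi>"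
    and VX: "V \<subseteq> X" and F: "finite F" "F \<subseteq> carrier G"
    and L: "finite L" "d ` V \<subseteq> L"
    and route: "\<forall>y\<in>V. ld y \<in> V \<and> a y \<in> F \<and> \<phi> (a y) (ld y) = y"
    and fibres: "\<forall>x\<in>ld ` V. 0 \<le> (\<Sum>y\<in>{y\<in>V. ld y = x}. c (d y))"
  shows "0 \<le> (\<Sum>l\<in>L. c l * \<mu> {y\<in>V. d y = l})"
proof -
  have mean: "is_mean X \<mu>" and invariant: "\<And>g A. g \<in> carrier G \<Longrightarrow> A \<subseteq> X \<Longrightarrow> \<mu> (\<phi> g ` A) = \<mu> A"
    using inv_mean unfolding invariant_mean_def by auto
  interpret group_action G X \<phi> by fact
  interpret group G using group_hom group_hom.axioms(1) by auto
  have aG: "a y \<in> carrier G" and y_eq: "\<phi> (a y) (ld y) = y" and ldX: "ld y \<in> X" if "y \<in> V" for y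
    using route that F VX by auto
  define I where "I = L \<times> F"
  define P where "P i = {y\<in>V. d y = fst i \<and> a y = snd i}" for i
  define Q where "Q i = \<phi> (inv\<^bsub>G\<^esub> (snd i)) ` P i" for i
  have finI: "finite I" unfolding I_def using F L by simp
  have PX: "P i \<subseteq> X" for i unfolding P_def using VX by auto
  have invG: "inv\<^bsub>G\<^esub> (snd i) \<in> carrier G" if "i \<in> I" for i using that F unfolding I_def by auto
  have QX: "\<forall>i\<in>I. Q i \<subseteq> X"
  proof
    fix i assume "i \<in> I"
    have "Q i \<subseteq> \<phi> (inv\<^bsub>G\<^esub> (snd i)) ` X" unfolding Q_def using PX by (rule image_mono)
    thus "Q i \<subseteq> X" using surj_prop[OF invG[OF \<open>i \<in> I\<close>]] by simp
  qed
  have level: "c l * \<mu> {y\<in>V. d y = l} = (\<Sum>g\<in>F. c l * \<mu> (P (l, g)))" for l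
  proof -
    have "{y\<in>V. d y = l} = (\<Union>g\<in>F. P (l, g))" using route unfolding P_def by auto
    moreover have "\<forall>g\<in>F. \<forall>h\<in>F. g \<noteq> h \<longrightarrow> P (l, g) \<inter> P (l, h) = {}" unfolding P_def by auto
    ultimately show ?thesis using mean_UN_disjoint[OF mean F(1), of "\<lambda>g. P (l, g)"] PX
      by (simp add: sum_distrib_left)
  qed
  have "(\<Sum>l\<in>L. c l * \<mu> {y\<in>V. d y = l}) = (\<Sum>i\<in>I. c (fst i) * \<mu> (P i))"
    unfolding level I_def sum.cartesian_product by (simp add: case_prod_beta)
  also have "\<dots> = (\<Sum>i\<in>I. c (fst i) * \<mu> (Q i))"
    by (intro sum.cong refl) (simp add: Q_def invariant invG PX)
  also have "\<dots> \<ge> 0"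
  proof (rule mean_nonneg_combination[OF mean finI QX], rule ballI)
    fix x assume x: "x \<in> X"
    txt \<open>The indices of the translated pieces containing x are those of the fibre over x.\<close>
    have bij: "bij_betw (\<lambda>y. (d y, a y)) {y\<in>V. ld y = x} {i\<in>I. x \<in> Q i}"
    proof (rule bij_betw_imageI)
      show "inj_on (\<lambda>y. (d y, a y)) {y\<in>V. ld y = x}"
      proof (rule inj_onI)
        fix y z assume y: "y \<in> {y\<in>V. ld y = x}" and z: "z \<in> {y\<in>V. ld y = x}"
          and "(d y, a y) = (d z, a z)"
        hence "a y = a z" by simp
        thus "y = z" using y_eq[of y] y_eq[of z] y z by simp
      qed
      show "(\<lambda>y. (d y, a y)) ` {y\<in>V. ld y = x} = {i\<in>I. x \<in> Q i}"
      proof (intro equalityI subsetI)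
        fix i assume "i \<in> (\<lambda>y. (d y, a y)) ` {y\<in>V. ld y = x}"
        then obtain y where y: "y \<in> V" "ld y = x" "i = (d y, a y)" by blast
        have "\<phi> (inv\<^bsub>G\<^esub> (a y)) y = x"
          using act_inv_cancel(1)[OF ga aG[OF y(1)] x] y_eq[OF y(1)] y(2) by simp
        moreover have "y \<in> P i" using y unfolding P_def by simp
        ultimately have "x \<in> Q i" unfolding Q_def using y(3) by force
        moreover have "i \<in> I" using y route L unfolding I_def by auto
        ultimately show "i \<in> {i\<in>I. x \<in> Q i}" by simp
      next
        fix i assume i: "i \<in> {i\<in>I. x \<in> Q i}"
        then obtain y where y: "y \<in> P i" "x = \<phi> (inv\<^bsub>G\<^esub> (snd i)) y" unfolding Q_def by blast
        have yV: "y \<in> V" and i_eq: "i = (d y, a y)" using y(1) unfolding P_def by auto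
        have "\<phi> (a y) x = y"
          using act_inv_cancel(2)[OF ga aG[OF yV]] y(2) i_eq yV VX by auto
        hence "\<phi> (a y) x = \<phi> (a y) (ld y)" using y_eq[OF yV] by simp
        hence "ld y = x" using inj_onD[OF inj_prop[OF aG[OF yV]]] x ldX[OF yV] by blast
        thus "i \<in> (\<lambda>y. (d y, a y)) ` {y\<in>V. ld y = x}" using yV i_eq by blast
      qed
    qed
    have "(\<Sum>i\<in>{i\<in>I. x \<in> Q i}. c (fst i)) = (\<Sum>y\<in>{y\<in>V. ld y = x}. c (d y))"
      using sum.reindex_bij_betw[OF bij, of "\<lambda>i. c (fst i)"] by simp
    also have "\<dots> \<ge> 0"
    proof (cases "x \<in> ld ` V")
      case False
      hence empty: "{y\<in>V. ld y = x} = {}" by blast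
      show ?thesis unfolding empty by simp
    qed (use fibres in blast)
    finally show "0 \<le> (\<Sum>i\<in>{i\<in>I. x \<in> Q i}. c (fst i))" .
  qed
  finally show ?thesis .
qed

section \<open>The edge measure\<close>

text \<open>With degrees bounded by N, the series defining \<open>\<mu>_E\<close> is a finite sum, and it only sees
  vertices of V, since vertices of positive degree lie on an edge.\<close>

lemma mu_E_as_finite_sum:
  assumes mean: "is_mean X \<mu>" and VX: "V \<subseteq> X" and EV: "\<forall>e\<in>E. e \<subseteq> V"
    and bound: "\<forall>x\<in>X. deg E x \<le> N"
  shows "mu_E X \<mu> E = 1/2 * (\<Sum>k\<le>N. real k * \<mu> {y\<in>V. deg E y = k})"
proof -
  have level: "real k * \<mu> {x\<in>X. deg E x = k} = real k * \<mu> {y\<in>V. deg E y = k}" for k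
  proof (cases "k = 0")
    case False
    have "deg E x \<noteq> 0 \<Longrightarrow> x \<in> V" for x
      using EV unfolding deg_def by (metis (no_types, lifting) card.empty empty_Collect_eq subsetD)
    hence "{x\<in>X. deg E x = k} = {y\<in>V. deg E y = k}" using False VX by auto
    thus ?thesis by simp
  qed simp
  have "(\<Sum>k. real k * \<mu> {x\<in>X. deg E x = k}) = (\<Sum>k\<le>N. real k * \<mu> {x\<in>X. deg E x = k})"
  proof (rule suminf_finite)
    fix k assume "k \<notin> {..N}"
    hence empty: "{x\<in>X. deg E x = k} = {}" using bound by force
    show "real k * \<mu> {x\<in>X. deg E x = k} = 0" unfolding empty mean_empty[OF mean] by simp
  qed simp
  thus ?thesis unfolding mu_E_def level by simp
qed

lemma mean_by_degree:
  assumes mean: "is_mean X \<mu>" and VX: "V \<subseteq> X" and bound: "\<forall>y\<in>V. deg E y \<le> N"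
  shows "\<mu> V = (\<Sum>k\<le>N. \<mu> {y\<in>V. deg E y = k})"
proof -
  have "V = (\<Union>k\<le>N. {y\<in>V. deg E y = k})" using bound by auto
  thus ?thesis using mean_UN_disjoint[OF mean, of "{..N}" "\<lambda>k. {y\<in>V. deg E y = k}"] VX by auto
qed

theorem lemma3p2:
  fixes G :: "('g, 'b) monoid_scheme" and S :: "'g set" and X :: "'x set"
    and \<phi> :: "'g \<Rightarrow> 'x \<Rightarrow> 'x" and \<mu> :: "'x set \<Rightarrow> real"
    and V :: "'x set" and E :: "'x set set" and C :: nat and \<alpha> :: real
  assumes "group G"
    and "finite S" and "S \<subseteq> carrier G" and "\<forall>s \<in> S. inv\<^bsub>G\<^esub> s \<in> S"
    and "generate G S = carrier G"
    and "group_action G X \<phi>"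
    and "countable X" and "infinite X"
    and "invariant_mean G \<phi> X \<mu>"
    and "is_subgraph \<phi> S X V E"
    and "\<forall>x \<in> V. card (component E x) \<le> C"
    and "\<forall>x \<in> V. \<alpha> \<le> real (card (component_edges E x)) / real (card (component E x))"
  shows "\<alpha> * \<mu> V \<le> mu_E X \<mu> E"
proof -
  have mean: "is_mean X \<mu>" using assms(9) unfolding invariant_mean_def by simp
  have VX: "V \<subseteq> X" and sch: "E \<subseteq> schreier_edges \<phi> S X" and EV: "\<forall>e\<in>E. e \<subseteq> V"
    using assms(10) unfolding is_subgraph_def by auto
  have two: "two_element_edges E" using sch by (rule schreier_two_element_edges)
  let ?N = "card S" and ?D = "\<lambda>k. {y\<in>V. deg E y = k}"
  have bound: "deg E x \<le> ?N" for x using schreier_deg_le[OF assms(6,3,4,2) sch] .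
  have muE: "mu_E X \<mu> E = 1/2 * (\<Sum>k\<le>?N. real k * \<mu> (?D k))"
    using mu_E_as_finite_sum[OF mean VX EV] bound by blast
  have muV: "\<mu> V = (\<Sum>k\<le>?N. \<mu> (?D k))" using mean_by_degree[OF mean VX] bound by blast
  have D_nonneg: "0 \<le> \<mu> (?D k)" for k by (rule mean_nonneg[OF mean]) (use VX in auto)
  show ?thesis
  proof (cases "\<alpha> \<le> 0")
    case True
    hence "\<alpha> * \<mu> V \<le> 0" using mean_nonneg[OF mean VX] by (simp add: mult_nonpos_nonneg)
    also have "0 \<le> mu_E X \<mu> E" unfolding muE using D_nonneg by (simp add: sum_nonneg)
    finally show ?thesis .
  next
    case False
    txt \<open>A positive ratio forces every component to be finite.\<close>
    have fin: "\<forall>y\<in>V. finite (component E y)"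
      using False assms(12) finite_of_positive_ratio by (meson not_le)
    obtain a where route:
      "\<forall>y\<in>V. leader E y \<in> V \<and> a y \<in> word_ball G S (C * C) \<and> \<phi> (a y) (leader E y) = y"
      using leader_routes[OF assms(6,3,4) sch EV VX fin assms(11)] .
    have "0 \<le> (\<Sum>k\<le>?N. (real k / 2 - \<alpha>) * \<mu> (?D k))"
      using invariant_mean_transport[where L = "{..card S}" and d = "deg E"
          and c = "\<lambda>k. real k / 2 - \<alpha>", OF assms(9,6) VX word_ball_finite[OF assms(2)]
          word_ball_carrier[OF assms(1,3)] _ _ route leader_fibre_excess_nonneg[OF two EV fin assms(12)]]
        bound by auto
    thus ?thesis unfolding muE muV
      by (simp add: sum_subtractf sum_distrib_left left_diff_distrib sum_divide_distrib)
  qed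
qed

end
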